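(* Let $d\ge1$ and $C\subset\mathbb R^d$ an adapted cone, and set $a=\mathbb P(\xi_1\in C)^{-1}$. If $\mathbb E\big(\Vert\xi_1\Vert^2a^{\Vert\xi_1\Vert^2}\big)<\infty$, then $\mathbb P(T_C>n)\ge a^{-n}$ for all $n$, and $\mathbb P\big(\max_{1\le i\le n}\Vert\xi_i\Vert>\sqrt n\,\big|\,T_C>n\big)\to0$ as $n\to\infty$.
   Context: $(\xi_n)_{n\ge1}$ i.i.d. random vectors in $\mathbb R^d$ with mean zero and covariance $\sigma^2I_d$, $\sigma^2>0$; $S_n=\xi_1+\cdots+\xi_n$. A linear cone $C$ ($\lambda C=C$ for all $\lambda>0$) is adapted if convex, with non-empty interior, and $\mathbb P(\xi_1\in C\setminus\{0\})>0$. $T_C=\inf\{n\ge1:S_n\notin C\}$. *)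

theory Defs
  imports "HOL-Probability.Probability"
begin

definition partial_sum :: "(nat \<Rightarrow> 'a \<Rightarrow> 'd::real_vector) \<Rightarrow> nat \<Rightarrow> 'a \<Rightarrow> 'd" where
  "partial_sum \<xi> n \<omega> = (\<Sum>i\<in>{1..n}. \<xi> i \<omega>)"

definition exit_time :: "(nat \<Rightarrow> 'a \<Rightarrow> 'd::real_vector) \<Rightarrow> 'd set \<Rightarrow> 'a \<Rightarrow> enat" where
  "exit_time \<xi> C \<omega> =
     (if \<exists>n\<ge>1. partial_sum \<xi> n \<omega> \<notin> C
      then enat (LEAST n. n \<ge> 1 \<and> partial_sum \<xi> n \<omega> \<notin> C) else \<infinity>)"

definition linear_cone :: "'d::real_vector set \<Rightarrow> bool" where
  "linear_cone C \<longleftrightarrow> (\<forall>c::real. c > 0 \<longrightarrow> (\<lambda>x. c *\<^sub>R x) ` C = C)"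

end

theory Submission
  imports Defs
begin

(* Let p = P(xi_1 \<in> C) > 0 and a = 1/p.  The proof has two parts.

   A linear convex cone is closed under addition, so if every
   increment xi_1, ..., xi_n lies in C then so does every partial sum, hence
   {T_C > n} contains {xi_1 \<in> C, ..., xi_n \<in> C}, whose probability is p^n by
   independence and identical distribution.  Thus P(T_C > n) \<ge> p^n = a^(-n).

   By the union bound and identical distribution,
     P(max_i |xi_i| > sqrt n, T_C > n) \<le> n P(|xi_1|^2 > n),
   so the conditional probability is at most n a^n P(Y > n) with Y = |xi_1|^2.
   On {Y > n} we have n a^n \<le> Y a^Y, so this is bounded by the integral of
   Y a^Y over {Y > n}, which tends to 0 by dominated convergence since Y a^Y
   is integrable by the moment hypothesis.

   Neither argument uses the mean, covariance or interior hypotheses. *)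

text \<open>A linear cone that is convex is closed under addition: x + y = 2 ((x + y) / 2).\<close>
lemma linear_cone_add_closed:
  assumes "linear_cone C" "convex C" "x \<in> C" "y \<in> C"
  shows "x + y \<in> C"
proof -
  have mid: "(1/2::real) *\<^sub>R x + (1/2::real) *\<^sub>R y \<in> C"
    using assms(2-4) by (intro convexD) auto
  have "(\<lambda>x. (2::real) *\<^sub>R x) ` C = C"
    using assms(1) unfolding linear_cone_def by auto
  hence "(2::real) *\<^sub>R ((1/2::real) *\<^sub>R x + (1/2::real) *\<^sub>R y) \<in> C"
    using mid by blast
  thus ?thesis by (simp add: scaleR_add_right)
qed

lemma partial_sum_in_cone:
  assumes cone: "linear_cone C" and conv: "convex C"
    and incr: "\<forall>i\<in>{1..n}. \<xi> i \<omega> \<in> C"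
  shows "k \<in> {1..n} \<Longrightarrow> partial_sum \<xi> k \<omega> \<in> C"
proof (induction k)
  case 0
  then show ?case by simp
next
  case (Suc k)
  show ?case
  proof (cases "k = 0")
    case True
    then show ?thesis using incr Suc by (simp add: partial_sum_def)
  next
    case False
    have "partial_sum \<xi> (Suc k) \<omega> = partial_sum \<xi> k \<omega> + \<xi> (Suc k) \<omega>"
      by (simp add: partial_sum_def)
    moreover have "partial_sum \<xi> k \<omega> \<in> C" using Suc False by auto
    moreover have "\<xi> (Suc k) \<omega> \<in> C" using Suc incr by auto
    ultimately show ?thesis using linear_cone_add_closed[OF cone conv] by simp
  qed
qed

lemma exit_time_gt_iff:
  "exit_time \<xi> C \<omega> > enat n \<longleftrightarrow> (\<forall>k\<in>{1..n}. partial_sum \<xi> k \<omega> \<in> C)"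
proof (cases "\<exists>m\<ge>1. partial_sum \<xi> m \<omega> \<notin> C")
  case True
  define L where "L = (LEAST m. m \<ge> 1 \<and> partial_sum \<xi> m \<omega> \<notin> C)"
  have L: "L \<ge> 1" "partial_sum \<xi> L \<omega> \<notin> C"
    unfolding L_def using True by (metis (mono_tags, lifting) LeastI)+
  have L_min: "L \<le> k" if "k \<ge> 1" "partial_sum \<xi> k \<omega> \<notin> C" for k
    unfolding L_def using that by (simp add: Least_le)
  have "exit_time \<xi> C \<omega> = enat L"
    using True by (simp add: exit_time_def L_def)
  moreover have "n < L \<longleftrightarrow> (\<forall>k\<in>{1..n}. partial_sum \<xi> k \<omega> \<in> C)"
    using L L_min by (meson atLeastAtMost_iff not_le order_trans)
  ultimately show ?thesis by simp
next
  case False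
  then have "exit_time \<xi> C \<omega> = \<infinity>" by (simp add: exit_time_def)
  then show ?thesis using False by auto
qed

lemma partial_sum_measurable:
  fixes \<xi> :: "nat \<Rightarrow> 'a \<Rightarrow> 'd::euclidean_space"
  assumes "\<And>i. i \<ge> 1 \<Longrightarrow> \<xi> i \<in> borel_measurable M"
  shows "partial_sum \<xi> k \<in> borel_measurable M"
  unfolding partial_sum_def by (intro borel_measurable_sum) (auto intro: assms)

lemma exit_time_survival_event_sets:
  fixes \<xi> :: "nat \<Rightarrow> 'a \<Rightarrow> 'd::euclidean_space"
  assumes rv: "\<And>i. i \<ge> 1 \<Longrightarrow> \<xi> i \<in> borel_measurable M" and C: "C \<in> sets borel"
  shows "{\<omega>\<in>space M. exit_time \<xi> C \<omega> > enat n} \<in> sets M"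
proof -
  have "{\<omega>\<in>space M. partial_sum \<xi> k \<omega> \<in> C} \<in> sets M" for k
    using measurable_sets[OF partial_sum_measurable[OF rv] C]
    by (simp add: vimage_def Int_def conj_commute)
  then show ?thesis
    unfolding exit_time_gt_iff by (intro sets.sets_Collect_finite_All) auto
qed

lemma sqrt_less_norm_iff: "sqrt (real n) < norm x \<longleftrightarrow> real n < (norm x)\<^sup>2"
  by (metis abs_of_nonneg norm_ge_zero real_sqrt_abs real_sqrt_less_iff)

context prob_space
begin

lemma prob_eq_if_same_distr:
  assumes X: "X \<in> borel_measurable M" and Y: "Y \<in> borel_measurable M"
    and same: "distr M borel X = distr M borel Y" and S: "S \<in> sets borel"
  shows "prob {\<omega>\<in>space M. X \<omega> \<in> S} = prob {\<omega>\<in>space M. Y \<omega> \<in> S}"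
proof -
  have "prob {\<omega>\<in>space M. X \<omega> \<in> S} = measure (distr M borel X) S"
    using measure_distr[OF X S] by (simp add: vimage_def Int_def conj_commute)
  also have "\<dots> = measure (distr M borel Y) S"
    using same by simp
  also have "\<dots> = prob {\<omega>\<in>space M. Y \<omega> \<in> S}"
    using measure_distr[OF Y S] by (simp add: vimage_def Int_def conj_commute)
  finally show ?thesis .
qed

lemma prob_all_in_indep:
  assumes indep: "indep_vars (\<lambda>_. borel) X I" and J: "finite J" "J \<subseteq> I"
    and S: "S \<in> sets borel"
    and p: "\<And>i. i \<in> J \<Longrightarrow> prob {\<omega>\<in>space M. X i \<omega> \<in> S} = p"
  shows "prob {\<omega>\<in>space M. \<forall>i\<in>J. X i \<omega> \<in> S} = p ^ card J"
proof (cases "J = {}")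
  case True
  then show ?thesis by (simp add: prob_space)
next
  case False
  have "{\<omega>\<in>space M. \<forall>i\<in>J. X i \<omega> \<in> S} = (\<Inter>i\<in>J. X i -` S \<inter> space M)"
    using False by auto
  also have "prob \<dots> = (\<Prod>i\<in>J. prob (X i -` S \<inter> space M))"
    using S by (intro indep_varsD[OF indep False J]) auto
  also have "\<dots> = (\<Prod>i\<in>J. p)"
    using p by (intro prod.cong) (auto simp: vimage_def Int_def conj_commute)
  finally show ?thesis by simp
qed

text \<open>Survival bound: P(T_C > n) \<ge> P(xi_1 \<in> C)^n for i.i.d. increments and a convex
  linear cone, since staying in C step by step keeps the walk in C.\<close>
lemma exit_time_survival_lower_bound:
  fixes \<xi> :: "nat \<Rightarrow> 'a \<Rightarrow> 'd::euclidean_space"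
  assumes rv: "\<And>i. i \<ge> 1 \<Longrightarrow> \<xi> i \<in> borel_measurable M"
    and indep: "indep_vars (\<lambda>_. borel) \<xi> {1..}"
    and ident: "\<And>i. i \<ge> 1 \<Longrightarrow> distr M borel (\<xi> i) = distr M borel (\<xi> 1)"
    and cone: "linear_cone C" and conv: "convex C" and C: "C \<in> sets borel"
  shows "prob {\<omega>\<in>space M. \<xi> 1 \<omega> \<in> C} ^ n \<le> prob {\<omega>\<in>space M. exit_time \<xi> C \<omega> > enat n}"
proof -
  have same_law: "prob {\<omega>\<in>space M. \<xi> i \<omega> \<in> C} = prob {\<omega>\<in>space M. \<xi> 1 \<omega> \<in> C}"
    if "i \<in> {1..n}" for i
    using that by (intro prob_eq_if_same_distr rv ident C) auto
  have "prob {\<omega>\<in>space M. \<xi> 1 \<omega> \<in> C} ^ n = prob {\<omega>\<in>space M. \<forall>i\<in>{1..n}. \<xi> i \<omega> \<in> C}"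
    using prob_all_in_indep[OF indep finite_atLeastAtMost _ C same_law] by auto
  also have "\<dots> \<le> prob {\<omega>\<in>space M. exit_time \<xi> C \<omega> > enat n}"
    using partial_sum_in_cone[OF cone conv, of n \<xi>]
    by (intro finite_measure_mono exit_time_survival_event_sets[OF rv C])
       (auto simp: exit_time_gt_iff)
  finally show ?thesis .
qed

lemma prob_some_norm_exceeds_le:
  fixes X :: "nat \<Rightarrow> 'a \<Rightarrow> 'b::euclidean_space"
  assumes rv: "\<And>i. i \<ge> 1 \<Longrightarrow> X i \<in> borel_measurable M"
    and ident: "\<And>i. i \<ge> 1 \<Longrightarrow> distr M borel (X i) = distr M borel (X 1)"
  shows "prob {\<omega>\<in>space M. (\<exists>i\<in>{1..n}. norm (X i \<omega>) > r) \<and> P \<omega>}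
           \<le> real n * prob {\<omega>\<in>space M. norm (X 1 \<omega>) > r}"
proof -
  define B where "B = {x::'b. r < norm x}"
  have B: "B \<in> sets borel"
    unfolding B_def by (intro borel_open open_Collect_less) (auto intro: continuous_intros)
  have B_events: "{\<omega>\<in>space M. X i \<omega> \<in> B} \<in> sets M" if "i \<ge> 1" for i
    using measurable_sets[OF rv[OF that] B] by (simp add: vimage_def Int_def conj_commute)
  have "prob {\<omega>\<in>space M. (\<exists>i\<in>{1..n}. norm (X i \<omega>) > r) \<and> P \<omega>}
        \<le> prob (\<Union>i\<in>{1..n}. {\<omega>\<in>space M. X i \<omega> \<in> B})"
    using B_events by (intro finite_measure_mono sets.finite_UN) (auto simp: B_def)
  also have "\<dots> \<le> (\<Sum>i\<in>{1..n}. prob {\<omega>\<in>space M. X i \<omega> \<in> B})"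
    using B_events by (intro finite_measure_subadditive_finite) auto
  also have "\<dots> = (\<Sum>i\<in>{1..n}. prob {\<omega>\<in>space M. X 1 \<omega> \<in> B})"
  proof (rule sum.cong[OF refl])
    fix i assume "i \<in> {1..n}"
    then show "prob {\<omega>\<in>space M. X i \<omega> \<in> B} = prob {\<omega>\<in>space M. X 1 \<omega> \<in> B}"
      by (intro prob_eq_if_same_distr rv ident B) auto
  qed
  also have "\<dots> = real n * prob {\<omega>\<in>space M. X 1 \<omega> \<in> B}"
    by simp
  finally show ?thesis
    unfolding B_def mem_Collect_eq .
qed

text \<open>Exponentially weighted tail: if Y a^Y is integrable with a \<ge> 1, then
  n a^n P(Y > n) \<rightarrow> 0.  On {Y > n} one has n a^n \<le> Y a^Y, and the integral of
  Y a^Y over {Y > n} vanishes by dominated convergence.\<close>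
lemma exponentially_weighted_tail_vanishes:
  fixes Y :: "'a \<Rightarrow> real"
  assumes Y: "Y \<in> borel_measurable M" and a: "a \<ge> 1"
    and int: "integrable M (\<lambda>\<omega>. Y \<omega> * a powr Y \<omega>)"
  shows "(\<lambda>n. real n * a ^ n * prob {\<omega>\<in>space M. Y \<omega> > real n}) \<longlonglongrightarrow> 0"
proof -
  define g where "g = (\<lambda>\<omega>. Y \<omega> * a powr Y \<omega>)"
  define A where "A n = {\<omega>\<in>space M. Y \<omega> > real n}" for n :: nat
  have A_sets[measurable]: "A n \<in> sets M" for n
    unfolding A_def using Y by measurable
  have g_int: "integrable M g" using int by (simp add: g_def)
  have weight_le: "real n * a ^ n \<le> g \<omega>" if "Y \<omega> > real n" for n \<omega>
  proof -
    have "a ^ n = a powr real n" using a by (simp add: powr_realpow)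
    also have "\<dots> \<le> a powr Y \<omega>" using a that by (intro powr_mono) auto
    finally show ?thesis
      unfolding g_def using that a by (intro mult_mono) auto
  qed
  have bound: "real n * a ^ n * prob (A n) \<le> (\<integral>\<omega>. indicator (A n) \<omega> * g \<omega> \<partial>M)" for n
  proof -
    have "real n * a ^ n * prob (A n) = (\<integral>\<omega>. indicator (A n) \<omega> * (real n * a ^ n) \<partial>M)"
      by simp
    also have "\<dots> \<le> (\<integral>\<omega>. indicator (A n) \<omega> * g \<omega> \<partial>M)"
    proof (rule integral_mono)
      show "integrable M (\<lambda>\<omega>. indicator (A n) \<omega> * (real n * a ^ n))"
        by (intro integrable_mult_left integrable_real_indicator)
           (auto simp: less_top[symmetric])
      show "integrable M (\<lambda>\<omega>. indicator (A n) \<omega> * g \<omega>)"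
        using integrable_mult_indicator[OF A_sets g_int] by simp
      show "indicator (A n) \<omega> * (real n * a ^ n) \<le> indicator (A n) \<omega> * g \<omega>" for \<omega>
        using weight_le[of n \<omega>] by (simp add: A_def indicator_def)
    qed
    finally show ?thesis .
  qed
  have "(\<lambda>n. \<integral>\<omega>. indicator (A n) \<omega> * g \<omega> \<partial>M) \<longlonglongrightarrow> (\<integral>\<omega>. 0 \<partial>M)"
  proof (rule integral_dominated_convergence[where w = "\<lambda>\<omega>. norm (g \<omega>)"])
    show "AE \<omega> in M. (\<lambda>n. indicator (A n) \<omega> * g \<omega>) \<longlonglongrightarrow> 0"
    proof (intro AE_I2 tendsto_eventually eventually_sequentiallyI)
      fix \<omega> n assume "nat \<lceil>Y \<omega>\<rceil> \<le> n"
      then show "indicator (A n) \<omega> * g \<omega> = 0" by (simp add: A_def)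
    qed
    show "AE \<omega> in M. norm (indicator (A n) \<omega> * g \<omega>) \<le> norm (g \<omega>)" for n
      by (intro AE_I2) (simp add: indicator_def)
  qed (use g_int in auto)
  then have lim: "(\<lambda>n. \<integral>\<omega>. indicator (A n) \<omega> * g \<omega> \<partial>M) \<longlonglongrightarrow> 0" by simp
  have "(\<lambda>n. real n * a ^ n * prob (A n)) \<longlonglongrightarrow> 0"
  proof (rule tendsto_sandwich[OF _ _ tendsto_const lim])
    show "\<forall>\<^sub>F n in sequentially. 0 \<le> real n * a ^ n * prob (A n)"
      using a by simp
    show "\<forall>\<^sub>F n in sequentially. real n * a ^ n * prob (A n) \<le> (\<integral>\<omega>. indicator (A n) \<omega> * g \<omega> \<partial>M)"
      using bound by simp
  qed
  then show ?thesis by (simp add: A_def)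
qed

lemma large_jump_given_survival_le:
  fixes \<xi> :: "nat \<Rightarrow> 'a \<Rightarrow> 'd::euclidean_space"
  assumes rv: "\<And>i. i \<ge> 1 \<Longrightarrow> \<xi> i \<in> borel_measurable M"
    and indep: "indep_vars (\<lambda>_. borel) \<xi> {1..}"
    and ident: "\<And>i. i \<ge> 1 \<Longrightarrow> distr M borel (\<xi> i) = distr M borel (\<xi> 1)"
    and cone: "linear_cone C" and conv: "convex C" and C: "C \<in> sets borel"
    and p_pos: "prob {\<omega>\<in>space M. \<xi> 1 \<omega> \<in> C} > 0"
  shows "prob {\<omega>\<in>space M. (\<exists>i\<in>{1..n}. norm (\<xi> i \<omega>) > sqrt (real n))
                            \<and> exit_time \<xi> C \<omega> > enat n}
           / prob {\<omega>\<in>space M. exit_time \<xi> C \<omega> > enat n}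
         \<le> real n * (1 / prob {\<omega>\<in>space M. \<xi> 1 \<omega> \<in> C}) ^ n
             * prob {\<omega>\<in>space M. (norm (\<xi> 1 \<omega>))\<^sup>2 > real n}"
proof -
  define p where "p = prob {\<omega>\<in>space M. \<xi> 1 \<omega> \<in> C}"
  have "prob {\<omega>\<in>space M. (\<exists>i\<in>{1..n}. norm (\<xi> i \<omega>) > sqrt (real n))
                            \<and> exit_time \<xi> C \<omega> > enat n}
        \<le> real n * prob {\<omega>\<in>space M. (norm (\<xi> 1 \<omega>))\<^sup>2 > real n}"
    using prob_some_norm_exceeds_le[where X = \<xi> and n = n and r = "sqrt (real n)", OF rv ident]
    by (simp add: sqrt_less_norm_iff)
  moreover have "p ^ n \<le> prob {\<omega>\<in>space M. exit_time \<xi> C \<omega> > enat n}"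
    unfolding p_def by (rule exit_time_survival_lower_bound[OF rv indep ident cone conv C])
  ultimately have "prob {\<omega>\<in>space M. (\<exists>i\<in>{1..n}. norm (\<xi> i \<omega>) > sqrt (real n))
                            \<and> exit_time \<xi> C \<omega> > enat n}
           / prob {\<omega>\<in>space M. exit_time \<xi> C \<omega> > enat n}
        \<le> real n * prob {\<omega>\<in>space M. (norm (\<xi> 1 \<omega>))\<^sup>2 > real n} / p ^ n"
    using p_pos by (intro frac_le) (auto simp: p_def)
  then show ?thesis by (simp add: p_def power_one_over)
qed

end

theorem mainTheorem10:
  fixes M :: "'a measure" and \<xi> :: "nat \<Rightarrow> 'a \<Rightarrow> 'd::euclidean_space"
    and C :: "'d set" and \<sigma> :: real
  assumes ps: "prob_space M"
    and rv: "\<And>i. i \<ge> 1 \<Longrightarrow> \<xi> i \<in> borel_measurable M"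
    and indep: "prob_space.indep_vars M (\<lambda>_. borel) \<xi> {1..}"
    and ident: "\<And>i. i \<ge> 1 \<Longrightarrow> distr M borel (\<xi> i) = distr M borel (\<xi> 1)"
    and sq_int: "integrable M (\<lambda>\<omega>. (norm (\<xi> 1 \<omega>))\<^sup>2)"
    and mean0: "integral\<^sup>L M (\<xi> 1) = 0"
    and sigma_pos: "\<sigma>\<^sup>2 > 0"
    and cov: "\<And>u v. integral\<^sup>L M (\<lambda>\<omega>. (u \<bullet> \<xi> 1 \<omega>) * (v \<bullet> \<xi> 1 \<omega>)) = \<sigma>\<^sup>2 * (u \<bullet> v)"
    and cone: "linear_cone C"
    and conv: "convex C"
    and int_ne: "interior C \<noteq> {}"
    and C_borel: "C \<in> sets borel"
    and adapted: "measure M {\<omega>\<in>space M. \<xi> 1 \<omega> \<in> C - {0}} > 0"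
    and moment: "integrable M (\<lambda>\<omega>. (norm (\<xi> 1 \<omega>))\<^sup>2 *
                    (1 / measure M {\<omega>\<in>space M. \<xi> 1 \<omega> \<in> C}) powr ((norm (\<xi> 1 \<omega>))\<^sup>2))"
  shows "(\<forall>n::nat. measure M {\<omega>\<in>space M. exit_time \<xi> C \<omega> > enat n}
            \<ge> (1 / measure M {\<omega>\<in>space M. \<xi> 1 \<omega> \<in> C}) powr (- real n))
       \<and> (\<lambda>n::nat. measure M {\<omega>\<in>space M. (\<exists>i\<in>{1..n}. norm (\<xi> i \<omega>) > sqrt (real n))
                                        \<and> exit_time \<xi> C \<omega> > enat n}
                  / measure M {\<omega>\<in>space M. exit_time \<xi> C \<omega> > enat n}) \<longlonglongrightarrow> 0"
proof -
  interpret prob_space M by (rule ps)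
  define p where "p = prob {\<omega>\<in>space M. \<xi> 1 \<omega> \<in> C}"
  define Y where "Y = (\<lambda>\<omega>. (norm (\<xi> 1 \<omega>))\<^sup>2)"
  define R where "R = (\<lambda>n::nat. prob {\<omega>\<in>space M. (\<exists>i\<in>{1..n}. norm (\<xi> i \<omega>) > sqrt (real n))
                                    \<and> exit_time \<xi> C \<omega> > enat n}
                / prob {\<omega>\<in>space M. exit_time \<xi> C \<omega> > enat n})"
  have "prob {\<omega>\<in>space M. \<xi> 1 \<omega> \<in> C - {0}} \<le> p"
    unfolding p_def using measurable_sets[OF rv[of 1] C_borel]
    by (intro finite_measure_mono) (auto simp: vimage_def Int_def conj_commute)
  then have p_pos: "p > 0" using adapted by linarith
  have "(1 / p) powr (- real n) \<le> prob {\<omega>\<in>space M. exit_time \<xi> C \<omega> > enat n}" for n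
    using p_pos exit_time_survival_lower_bound[OF rv indep ident cone conv C_borel, of n]
    by (simp add: p_def powr_minus powr_realpow power_one_over)
  moreover have "R \<longlonglongrightarrow> 0"
  proof (rule tendsto_sandwich[OF _ _ tendsto_const])
    show "\<forall>\<^sub>F n in sequentially. 0 \<le> R n" by (simp add: R_def)
    show "\<forall>\<^sub>F n in sequentially. R n \<le> real n * (1 / p) ^ n * prob {\<omega>\<in>space M. Y \<omega> > real n}"
      using large_jump_given_survival_le[OF rv indep ident cone conv C_borel] p_pos
      by (simp add: R_def Y_def p_def)
    show "(\<lambda>n. real n * (1 / p) ^ n * prob {\<omega>\<in>space M. Y \<omega> > real n}) \<longlonglongrightarrow> 0"
    proof (rule exponentially_weighted_tail_vanishes)
      show "Y \<in> borel_measurable M" unfolding Y_def using rv[of 1] by measurable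
      show "1 / p \<ge> 1" using p_pos prob_le_1 by (simp add: p_def)
      show "integrable M (\<lambda>\<omega>. Y \<omega> * (1 / p) powr Y \<omega>)"
        using moment by (simp add: Y_def p_def)
    qed
  qed
  ultimately show ?thesis
    unfolding R_def p_def by blast
qed

end
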